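(* Let $\Gamma=(V,E)$ be a layered graph with unique minimal vertex $*$. Then $A(\Gamma)\cong T(V_+)/R_V$, where $R_V$ is the two-sided ideal of $T(V_+)$ generated by $\{\tilde e(\pi,i)-\tilde e(\pi',i): \pi\approx\pi',\ 0\le i\le \|\pi\|\}$.
   Context: A layered graph is a finite directed graph $\Gamma=(V,E)$ with $V=\bigsqcup_{i=0}^{N}V_i$ such that every edge $(v,w)\in E$ with $v\in V_i$ has $w\in V_{i-1}$. Write $V_+=\bigsqcup_{i\ge1}V_i$ and $S(v)=\{w:(v,w)\in E\}$; it is assumed that $S(v)\neq\emptyset$ for every $v\in V_+$. $\Gamma$ has unique minimal vertex $*$ if $V_0=\{*\}$. A path is a sequence of edges $\pi=(e_1,\dots,e_m)$ with head of $e_i$ = tail of $e_{i+1}$, of length $\|\pi\|=m$; $\pi\approx\pi'$ means same length, same start and same end. Fix a field $\mathbb F$; $T(X)$ is the free associative algebra on $X$. For a path $\pi=(e_1,\dots,e_m)$ define $e(\pi,i)\in T(E)$ by $(t-e_1)(t-e_2)\cdots(t-e_m)=\sum_{i}e(\pi,i)t^i$ in $T(E)[t]$ with $t$ a central indeterminate. The universal labeling algebra is $A(\Gamma)=T(E)/R$, where $R$ is generated by $e(\pi,i)-e(\pi',i)$ for all $\pi\approx\pi'$, $0\le i\le\|\pi\|$. Let $\phi'':T(E)\to T(V_+)$ be the algebra map with $\phi''((v,w))=v-w$ if $w\neq *$ and $\phi''((v,w))=v$ if $w=*$, and set $\tilde e(\pi,i)=\phi''(e(\pi,i))$. *)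

theory Defs
  imports "HOL-Algebra.QuotRing"
begin

text \<open>Elements of T(X) are finitely supported functions from words (lists over X)
  to the field; multiplication is concatenation-convolution.\<close>

definition free_alg :: "'x set \<Rightarrow> ('x list \<Rightarrow> 'k::field) ring" where
  "free_alg X = \<lparr>carrier = {f. finite {w. f w \<noteq> 0} \<and> (\<forall>w. f w \<noteq> 0 \<longrightarrow> set w \<subseteq> X)},
     mult = (\<lambda>f g w. \<Sum>k\<le>length w. f (take k w) * g (drop k w)),
     one = (\<lambda>w. if w = [] then 1 else 0),
     zero = (\<lambda>w. 0),
     add = (\<lambda>f g w. f w + g w)\<rparr>"

definition fa_gen :: "'x \<Rightarrow> ('x list \<Rightarrow> 'k::field)" where
  "fa_gen x = (\<lambda>w. if w = [x] then 1 else 0)"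

definition fa_scalar :: "'k::field \<Rightarrow> ('x list \<Rightarrow> 'k)" where
  "fa_scalar c = (\<lambda>w. if w = [] then c else 0)"

definition fa_mult :: "('x list \<Rightarrow> 'k::field) \<Rightarrow> ('x list \<Rightarrow> 'k) \<Rightarrow> ('x list \<Rightarrow> 'k)" where
  "fa_mult f g = (\<lambda>w. \<Sum>k\<le>length w. f (take k w) * g (drop k w))"

definition fa_diff :: "('x list \<Rightarrow> 'k::field) \<Rightarrow> ('x list \<Rightarrow> 'k) \<Rightarrow> ('x list \<Rightarrow> 'k)" where
  "fa_diff f g = (\<lambda>w. f w - g w)"

text \<open>Algebra map T(X) \<rightarrow> T(Y) determined by the images of the generators.\<close>
definition fa_lift :: "('x \<Rightarrow> ('y list \<Rightarrow> 'k::field)) \<Rightarrow> ('x list \<Rightarrow> 'k) \<Rightarrow> ('y list \<Rightarrow> 'k)" where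
  "fa_lift g p = (\<lambda>u. \<Sum>w\<in>{w. p w \<noteq> 0}. p w * foldr fa_mult (map g w) (fa_scalar 1) u)"

text \<open>Layer function lvl: v \<in> V_i iff lvl v = i.\<close>
definition layered_graph :: "'v set \<Rightarrow> ('v \<times> 'v) set \<Rightarrow> ('v \<Rightarrow> nat) \<Rightarrow> bool" where
  "layered_graph V E lvl \<longleftrightarrow> finite V \<and> E \<subseteq> V \<times> V \<and>
     (\<forall>(v,w)\<in>E. lvl v \<ge> 1 \<and> lvl w = lvl v - 1) \<and>
     (\<forall>v\<in>V. lvl v \<ge> 1 \<longrightarrow> (\<exists>w. (v,w) \<in> E))"

definition unique_min :: "'v set \<Rightarrow> ('v \<Rightarrow> nat) \<Rightarrow> 'v \<Rightarrow> bool" where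
  "unique_min V lvl s \<longleftrightarrow> {v\<in>V. lvl v = 0} = {s}"

definition Vplus :: "'v set \<Rightarrow> ('v \<Rightarrow> nat) \<Rightarrow> 'v set" where
  "Vplus V lvl = {v\<in>V. lvl v \<ge> 1}"

definition is_path :: "('v \<times> 'v) set \<Rightarrow> ('v \<times> 'v) list \<Rightarrow> bool" where
  "is_path E p \<longleftrightarrow> p \<noteq> [] \<and> set p \<subseteq> E \<and>
     (\<forall>j. Suc j < length p \<longrightarrow> snd (p ! j) = fst (p ! Suc j))"

definition path_equiv :: "('v \<times> 'v) list \<Rightarrow> ('v \<times> 'v) list \<Rightarrow> bool" where
  "path_equiv p q \<longleftrightarrow> length p = length q \<and> fst (hd p) = fst (hd q) \<and> snd (last p) = snd (last q)"

text \<open>e(pi,i): coefficient of t^i in (t - e_1)...(t - e_m) in T(E)[t], t central.\<close>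
fun ecoef :: "('v \<times> 'v) list \<Rightarrow> nat \<Rightarrow> (('v \<times> 'v) list \<Rightarrow> 'k::field)" where
  "ecoef [] i = (if i = 0 then fa_scalar 1 else (\<lambda>w. 0))"
| "ecoef (e # p) i = fa_diff (if i = 0 then (\<lambda>w. 0) else ecoef p (i - 1)) (fa_mult (fa_gen e) (ecoef p i))"

definition phi2_gen :: "'v \<Rightarrow> ('v \<times> 'v) \<Rightarrow> ('v list \<Rightarrow> 'k::field)" where
  "phi2_gen s e = (if snd e = s then fa_gen (fst e) else fa_diff (fa_gen (fst e)) (fa_gen (snd e)))"

definition etilde :: "'v \<Rightarrow> ('v \<times> 'v) list \<Rightarrow> nat \<Rightarrow> ('v list \<Rightarrow> 'k::field)" where
  "etilde s p i = fa_lift (phi2_gen s) (ecoef p i)"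

definition R_E :: "('v \<times> 'v) set \<Rightarrow> (('v \<times> 'v) list \<Rightarrow> 'k::field) set" where
  "R_E E = genideal (free_alg E)
     {fa_diff (ecoef p i) (ecoef q i) | p q i. is_path E p \<and> is_path E q \<and> path_equiv p q \<and> i \<le> length p}"

definition R_V :: "'v set \<Rightarrow> ('v \<times> 'v) set \<Rightarrow> ('v \<Rightarrow> nat) \<Rightarrow> 'v \<Rightarrow> ('v list \<Rightarrow> 'k::field) set" where
  "R_V V E lvl s = genideal (free_alg (Vplus V lvl))
     {fa_diff (etilde s p i) (etilde s q i) | p q i. is_path E p \<and> is_path E q \<and> path_equiv p q \<and> i \<le> length p}"

definition labeling_alg :: "('v \<times> 'v) set \<Rightarrow> (('v \<times> 'v) list \<Rightarrow> 'k::field) set ring" where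
  "labeling_alg E = free_alg E Quot R_E E"

end

theory Submission
  imports Defs "HOL-Library.Function_Algebras"
begin

text \<open>Let \<open>phi\<close> be the algebra map \<open>T(E) \<rightarrow> T(V\<^sub>+)\<close> induced by \<open>phi2_gen\<close>, and let \<open>psi\<close>
  send a vertex \<open>v\<close> to the sum of the edges of a fixed path from \<open>v\<close> down to the root.
  Along such a path the images \<open>v - w\<close> of the edges telescope, so \<open>phi \<circ> psi = id\<close>.
  Conversely, for an edge \<open>e = (v, w)\<close> the root path of \<open>v\<close> and \<open>e\<close> followed by the root path
  of \<open>w\<close> are equivalent, and as \<open>e(\<pi>, |\<pi>| - 1)\<close> is minus the sum of the edges of \<open>\<pi>\<close>, their edge
  sums agree modulo \<open>R\<close>; thus \<open>psi \<circ> phi\<close> fixes every generator, hence every element, of \<open>T(E)\<close>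
  modulo \<open>R\<close>. Since \<open>phi\<close> maps the generators of \<open>R\<close> onto those of \<open>R\<^sub>V\<close>, it induces the
  isomorphism.\<close>

section \<open>Quotients by generated ideals\<close>

lemma (in ring) ideal_mem_iff_of_minus:
  assumes "ideal I R" "a \<in> carrier R" "b \<in> carrier R" "a \<ominus> b \<in> I"
  shows "a \<in> I \<longleftrightarrow> b \<in> I"
proof -
  interpret I: ideal I R by (rule assms(1))
  have "a = (a \<ominus> b) \<oplus> b" "b = a \<ominus> (a \<ominus> b)"
    using assms(2,3) by (simp_all add: minus_eq minus_add minus_minus add.m_assoc r_neg l_neg
        add.m_assoc[symmetric])
  then show ?thesis using assms(4) by (metis I.a_closed I.a_inv_closed minus_eq)
qed

lemma (in ideal) rcos_eq_self_iff: "x \<in> carrier R \<Longrightarrow> I +> x = I \<longleftrightarrow> x \<in> I"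
  using rcos_const_imp_mem[of x] a_rcos_zero[OF is_ideal, of x] by blast

lemma ring_hom_genideal_image:
  assumes A: "ring A" and B: "ring B" and f: "f \<in> ring_hom A B" and G: "G \<subseteq> carrier A"
  shows "f ` genideal A G \<subseteq> genideal B (f ` G)"
proof -
  have fG: "f ` G \<subseteq> carrier B" using G ring_hom_closed[OF f] by blast
  have "genideal A G \<subseteq> {x \<in> carrier A. f x \<in> genideal B (f ` G)}"
  proof (rule ring.genideal_minimal[OF A ring_hom_ring.ideal_vimage[OF ring_hom_ringI2[OF A B f]]])
    show "ideal (genideal B (f ` G)) B" by (rule ring.genideal_ideal[OF B fG])
    show "G \<subseteq> {x \<in> carrier A. f x \<in> genideal B (f ` G)}"
      using G ring.genideal_self[OF B fG] by blast
  qed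
  then show ?thesis by blast
qed

lemma retraction_genideal_iff:
  assumes A: "ring A" and B: "ring B"
    and f: "f \<in> ring_hom A B" and g: "g \<in> ring_hom B A"
    and G: "G \<subseteq> carrier A"
    and gf: "\<And>x. x \<in> carrier A \<Longrightarrow> x \<ominus>\<^bsub>A\<^esub> g (f x) \<in> genideal A G"
    and x: "x \<in> carrier A"
  shows "f x \<in> genideal B (f ` G) \<longleftrightarrow> x \<in> genideal A G"
proof -
  have I: "ideal (genideal A G) A" by (rule ring.genideal_ideal[OF A G])
  have fG: "f ` G \<subseteq> carrier B" using G ring_hom_closed[OF f] by blast
  have gfG: "g ` f ` G \<subseteq> genideal A G"
  proof
    fix z assume "z \<in> g ` f ` G"
    then obtain d where d: "d \<in> G" "z = g (f d)" by blast
    then have "d \<in> carrier A" "g (f d) \<in> carrier A"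
      using G ring_hom_closed[OF f] ring_hom_closed[OF g] by blast+
    moreover have "d \<in> genideal A G" using d(1) ring.genideal_self[OF A G] by blast
    ultimately show "z \<in> genideal A G"
      using ring.ideal_mem_iff_of_minus[OF A I] gf d by blast
  qed
  have "g ` genideal B (f ` G) \<subseteq> genideal A G"
    using ring_hom_genideal_image[OF B A g fG] ring.genideal_minimal[OF A I gfG] by blast
  then have "f x \<in> genideal B (f ` G) \<Longrightarrow> x \<in> genideal A G"
    using ring.ideal_mem_iff_of_minus[OF A I x _ gf[OF x]] ring_hom_closed[OF g] ring_hom_closed[OF f x]
    by blast
  moreover have "x \<in> genideal A G \<Longrightarrow> f x \<in> genideal B (f ` G)"
    using ring_hom_genideal_image[OF A B f G] by blast
  ultimately show ?thesis by blast
qed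

lemma quotient_iso_of_retraction:
  assumes A: "ring A" and B: "ring B"
    and f: "f \<in> ring_hom A B" and g: "g \<in> ring_hom B A"
    and G: "G \<subseteq> carrier A"
    and fg: "\<And>y. y \<in> carrier B \<Longrightarrow> f (g y) = y"
    and gf: "\<And>x. x \<in> carrier A \<Longrightarrow> x \<ominus>\<^bsub>A\<^esub> g (f x) \<in> genideal A G"
  shows "\<exists>h. h \<in> ring_iso (A Quot genideal A G) (B Quot genideal B (f ` G)) \<and>
             (\<forall>x \<in> carrier A. h (genideal A G +>\<^bsub>A\<^esub> x) = genideal B (f ` G) +>\<^bsub>B\<^esub> f x)"
proof -
  define I where "I = genideal A G"
  define J where "J = genideal B (f ` G)"
  have f_closed: "f x \<in> carrier B" if "x \<in> carrier A" for x using ring_hom_closed[OF f that] .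
  have J: "ideal J B"
    unfolding J_def using G f_closed by (intro ring.genideal_ideal[OF B]) blast
  define \<pi> where "\<pi> = (\<lambda>x. J +>\<^bsub>B\<^esub> f x)"
  have \<pi>: "ring_hom_ring A (B Quot J) \<pi>"
    using ring_hom_ringI2[OF A ideal.quotient_is_ring[OF J]
        ring_hom_trans[OF f ideal.rcos_ring_hom[OF J]]]
    unfolding \<pi>_def o_def .
  have ker: "a_kernel A (B Quot J) \<pi> = I"
  proof (rule Set.set_eqI)
    fix x
    have "x \<in> a_kernel A (B Quot J) \<pi> \<longleftrightarrow> x \<in> carrier A \<and> J +>\<^bsub>B\<^esub> f x = J"
      by (simp add: a_kernel_def' \<pi>_def FactRing_def)
    also have "\<dots> \<longleftrightarrow> x \<in> carrier A \<and> x \<in> I"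
      using ideal.rcos_eq_self_iff[OF J] f_closed retraction_genideal_iff[OF A B f g G gf]
      unfolding I_def J_def by blast
    also have "\<dots> \<longleftrightarrow> x \<in> I"
      using ideal.Icarr[OF ring.genideal_ideal[OF A G]] unfolding I_def by blast
    finally show "x \<in> a_kernel A (B Quot J) \<pi> \<longleftrightarrow> x \<in> I" .
  qed
  have surj: "\<pi> ` carrier A = carrier (B Quot J)"
  proof
    show "\<pi> ` carrier A \<subseteq> carrier (B Quot J)"
      using f_closed by (auto simp: \<pi>_def FactRing_simps)
    show "carrier (B Quot J) \<subseteq> \<pi> ` carrier A"
    proof
      fix X assume "X \<in> carrier (B Quot J)"
      then obtain y where "y \<in> carrier B" "X = J +>\<^bsub>B\<^esub> y"
        by (auto simp: FactRing_simps)
      then show "X \<in> \<pi> ` carrier A" using ring_hom_closed[OF g] fg unfolding \<pi>_def by force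
    qed
  qed
  show ?thesis
    unfolding I_def[symmetric] J_def[symmetric]
  proof (intro exI conjI ballI)
    show "(\<lambda>X. the_elem (\<pi> ` X)) \<in> ring_iso (A Quot I) (B Quot J)"
      using ring_hom_ring.FactRing_iso_set[OF \<pi> surj] unfolding ker .
    show "the_elem (\<pi> ` (I +>\<^bsub>A\<^esub> x)) = J +>\<^bsub>B\<^esub> f x" if "x \<in> carrier A" for x
      using ring_hom_ring.the_elem_simp[OF \<pi> that] unfolding ker by (simp only: \<pi>_def)
  qed
qed

section \<open>The free associative algebra\<close>

definition supp :: "('a \<Rightarrow> 'k::zero) \<Rightarrow> 'a set" where
  "supp f = {w. f w \<noteq> 0}"

definition fa_smult :: "'k::field \<Rightarrow> ('x list \<Rightarrow> 'k) \<Rightarrow> ('x list \<Rightarrow> 'k)" where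
  "fa_smult c f = (\<lambda>w. c * f w)"

definition fa_word :: "'x list \<Rightarrow> ('x list \<Rightarrow> 'k::field)" where
  "fa_word u = (\<lambda>w. if w = u then 1 else 0)"

definition lift_word :: "('x \<Rightarrow> ('y list \<Rightarrow> 'k::field)) \<Rightarrow> 'x list \<Rightarrow> ('y list \<Rightarrow> 'k)" where
  "lift_word g w = foldr fa_mult (map g w) (fa_scalar 1)"

lemma sum_fun_apply: "(\<Sum>i\<in>I. F i) x = (\<Sum>i\<in>I. F i x)"
  by (induction I rule: infinite_finite_induct) auto

lemma fa_diff_eq_minus: "fa_diff f g = f - g"
  by (simp add: fa_diff_def fun_eq_iff)

lemma fa_smult_smult: "fa_smult a (fa_smult b f) = fa_smult (a * b) f"
  by (simp add: fa_smult_def mult.assoc)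

lemma fa_smult_minus_one: "fa_smult (-1) f = - f"
  by (simp add: fa_smult_def fun_eq_iff)

lemma fa_mult_add_left: "fa_mult (f + g) h = fa_mult f h + fa_mult g h"
  by (auto simp: fa_mult_def fun_eq_iff distrib_right sum.distrib)

lemma fa_mult_add_right: "fa_mult h (f + g) = fa_mult h f + fa_mult h g"
  by (auto simp: fa_mult_def fun_eq_iff distrib_left sum.distrib)

lemma fa_mult_zero_right [simp]: "fa_mult h 0 = 0"
  by (simp add: fa_mult_def fun_eq_iff)

lemma fa_mult_diff_left: "fa_mult (f - g) h = fa_mult f h - fa_mult g h"
  by (simp add: fa_mult_def fun_eq_iff left_diff_distrib sum_subtractf)

lemma fa_mult_diff_right: "fa_mult h (f - g) = fa_mult h f - fa_mult h g"
  by (simp add: fa_mult_def fun_eq_iff right_diff_distrib sum_subtractf)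

lemma fa_mult_sum_left: "fa_mult (\<Sum>i\<in>I. F i) h = (\<Sum>i\<in>I. fa_mult (F i) h)"
  unfolding fa_mult_def fun_eq_iff sum_fun_apply sum_distrib_right by (auto intro: sum.swap)

lemma fa_mult_sum_right: "fa_mult h (\<Sum>i\<in>I. F i) = (\<Sum>i\<in>I. fa_mult h (F i))"
  unfolding fa_mult_def fun_eq_iff sum_fun_apply sum_distrib_left by (auto intro: sum.swap)

lemma fa_mult_smult_left: "fa_mult (fa_smult c f) g = fa_smult c (fa_mult f g)"
  by (auto simp: fa_mult_def fa_smult_def fun_eq_iff sum_distrib_left mult.assoc)

lemma fa_mult_smult_right: "fa_mult f (fa_smult c g) = fa_smult c (fa_mult f g)"
  by (auto simp: fa_mult_def fa_smult_def fun_eq_iff sum_distrib_left mult.left_commute)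

lemma fa_mult_assoc: "fa_mult (fa_mult f g) h = fa_mult f (fa_mult g h)"
proof (rule ext)
  fix w :: "'a list"
  define n where "n = length w"
  define G where "G = (\<lambda>i j. f (take i w) * g (take j (drop i w)) * h (drop (i + j) w))"
  have "fa_mult (fa_mult f g) h w = (\<Sum>k\<le>n. \<Sum>i\<le>k. G i (k - i))"
    unfolding fa_mult_def n_def G_def sum_distrib_right
    by (intro sum.cong refl) (auto simp: min_def take_drop)
  also have "\<dots> = (\<Sum>(i, j)\<in>{(i, j). i + j \<le> n}. G i j)"
    by (rule sum.triangle_reindex_eq[symmetric])
  also have "{(i, j). i + j \<le> n} = Sigma {..n} (\<lambda>i. {..n - i})" by auto
  also have "(\<Sum>(i, j)\<in>Sigma {..n} (\<lambda>i. {..n - i}). G i j) = (\<Sum>i\<le>n. \<Sum>j\<le>n - i. G i j)"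
    by (rule sum.Sigma[symmetric]) auto
  also have "\<dots> = fa_mult f (fa_mult g h) w"
    unfolding fa_mult_def n_def G_def sum_distrib_left
    by (intro sum.cong refl) (auto simp: mult.assoc add.commute)
  finally show "fa_mult (fa_mult f g) h w = fa_mult f (fa_mult g h) w" .
qed

lemma fa_mult_one_left [simp]: "fa_mult (fa_scalar 1) f = f"
proof (rule ext)
  fix w :: "'a list"
  have "fa_mult (fa_scalar 1) f w = (\<Sum>k\<le>length w. if k = 0 then f w else 0)"
    unfolding fa_mult_def fa_scalar_def by (intro sum.cong refl) auto
  then show "fa_mult (fa_scalar 1) f w = f w" by simp
qed

lemma fa_mult_one_right [simp]: "fa_mult f (fa_scalar 1) = f"
proof (rule ext)
  fix w :: "'a list"
  have "fa_mult f (fa_scalar 1) w = (\<Sum>k\<le>length w. if k = length w then f w else 0)"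
    unfolding fa_mult_def fa_scalar_def by (intro sum.cong refl) auto
  then show "fa_mult f (fa_scalar 1) w = f w" by simp
qed

lemma fa_mult_word: "fa_mult (fa_word u) (fa_word v) = fa_word (u @ v)"
proof (rule ext)
  fix w :: "'a list"
  have split: "take k w = u \<and> drop k w = v \<longleftrightarrow> k = length u \<and> w = u @ v" if "k \<le> length w" for k
    using that by (metis append_eq_conv_conj append_take_drop_id length_take min_absorb2)
  have "fa_mult (fa_word u) (fa_word v) w = (\<Sum>k\<le>length w. if k = length u \<and> w = u @ v then 1 else 0)"
    unfolding fa_mult_def fa_word_def by (intro sum.cong refl) (auto simp: split[symmetric])
  also have "\<dots> = fa_word (u @ v) w" unfolding fa_word_def by (auto simp: sum.If_cases)
  finally show "fa_mult (fa_word u) (fa_word v) w = fa_word (u @ v) w" .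
qed

lemma fa_gen_eq_word: "fa_gen x = fa_word [x]"
  by (simp add: fa_gen_def fa_word_def)

lemma fa_scalar_eq_smult_word: "fa_scalar c = fa_smult c (fa_word [])"
  by (simp add: fa_scalar_def fa_smult_def fa_word_def fun_eq_iff)

lemma fa_expand: "finite S \<Longrightarrow> supp p \<subseteq> S \<Longrightarrow> p = (\<Sum>w\<in>S. fa_smult (p w) (fa_word w))"
  by (auto simp: fun_eq_iff sum_fun_apply fa_smult_def fa_word_def supp_def if_distrib
      cong: if_cong)

lemma free_alg_mult [simp]: "mult (free_alg X) = fa_mult"
  by (auto simp: free_alg_def fa_mult_def fun_eq_iff)

lemma free_alg_add [simp]: "add (free_alg X) = (+)"
  by (auto simp: free_alg_def fun_eq_iff)

lemma free_alg_one [simp]: "one (free_alg X) = fa_scalar 1"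
  by (auto simp: free_alg_def fa_scalar_def fun_eq_iff)

lemma free_alg_zero [simp]: "zero (free_alg X) = 0"
  by (auto simp: free_alg_def fun_eq_iff)

lemma free_alg_carrier:
  "f \<in> carrier (free_alg X) \<longleftrightarrow> finite (supp f) \<and> (\<forall>w\<in>supp f. set w \<subseteq> X)"
  by (auto simp: free_alg_def supp_def)

lemma supp_add: "supp (f + g) \<subseteq> supp f \<union> supp (g :: 'a \<Rightarrow> 'k::comm_monoid_add)"
  by (auto simp: supp_def)

lemma supp_fa_mult: "supp (fa_mult f g) \<subseteq> (\<lambda>(u, v). u @ v) ` (supp f \<times> supp g)"
proof
  fix w assume "w \<in> supp (fa_mult f g)"
  then obtain k where "f (take k w) * g (drop k w) \<noteq> 0"
    by (auto simp: supp_def fa_mult_def intro: sum.not_neutral_contains_not_neutral)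
  then show "w \<in> (\<lambda>(u, v). u @ v) ` (supp f \<times> supp g)"
    by (intro image_eqI[of _ _ "(take k w, drop k w)"]) (auto simp: supp_def)
qed

lemma free_alg_zero_closed: "0 \<in> carrier (free_alg X)"
  unfolding free_alg_carrier by (simp add: supp_def)

lemma free_alg_add_closed:
  "f \<in> carrier (free_alg X) \<Longrightarrow> g \<in> carrier (free_alg X) \<Longrightarrow> f + g \<in> carrier (free_alg X)"
  unfolding free_alg_carrier using supp_add[of f g] by (meson finite_Un finite_subset in_mono Un_iff)

lemma free_alg_neg_closed: "f \<in> carrier (free_alg X) \<Longrightarrow> - f \<in> carrier (free_alg X)"
  unfolding free_alg_carrier by (simp add: supp_def)

lemma free_alg_diff_closed:
  "f \<in> carrier (free_alg X) \<Longrightarrow> g \<in> carrier (free_alg X) \<Longrightarrow> f - g \<in> carrier (free_alg X)"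
  unfolding diff_conv_add_uminus by (intro free_alg_add_closed free_alg_neg_closed)

lemma free_alg_smult_closed: "f \<in> carrier (free_alg X) \<Longrightarrow> fa_smult c f \<in> carrier (free_alg X)"
  unfolding free_alg_carrier by (auto simp: supp_def fa_smult_def intro: finite_subset[of _ "supp f"])

lemma free_alg_sum_closed:
  "(\<And>i. i \<in> I \<Longrightarrow> F i \<in> carrier (free_alg X)) \<Longrightarrow>
    (\<Sum>i\<in>I. F i) \<in> carrier (free_alg X)"
  by (induction I rule: infinite_finite_induct) (auto simp: free_alg_add_closed free_alg_zero_closed)

lemma free_alg_word_closed: "set u \<subseteq> X \<Longrightarrow> fa_word u \<in> carrier (free_alg X)"
  unfolding free_alg_carrier by (auto simp: supp_def fa_word_def)

lemma free_alg_gen_closed: "x \<in> X \<Longrightarrow> fa_gen x \<in> carrier (free_alg X)"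
  by (simp add: fa_gen_eq_word free_alg_word_closed)

lemma free_alg_scalar_closed: "fa_scalar c \<in> carrier (free_alg X)"
  by (simp add: fa_scalar_eq_smult_word free_alg_smult_closed free_alg_word_closed)

lemma free_alg_mult_closed:
  "f \<in> carrier (free_alg X) \<Longrightarrow> g \<in> carrier (free_alg X) \<Longrightarrow> fa_mult f g \<in> carrier (free_alg X)"
  unfolding free_alg_carrier using supp_fa_mult[of f g]
  by (auto intro: finite_subset) fastforce

lemma free_alg_ring: "ring (free_alg X)"
proof (rule ringI)
  show "abelian_group (free_alg X)"
    by (rule abelian_groupI) (auto simp: free_alg_add_closed free_alg_zero_closed
        add.assoc add.commute intro!: bexI[of _ "- _"] free_alg_neg_closed)
  show "monoid (free_alg X)"
    by (rule monoidI) (auto simp: free_alg_mult_closed free_alg_scalar_closed fa_mult_assoc)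
qed (auto simp: fa_mult_add_left fa_mult_add_right)

lemma free_alg_minus:
  assumes "f \<in> carrier (free_alg X)" "g \<in> carrier (free_alg X)"
  shows "f \<ominus>\<^bsub>free_alg X\<^esub> g = f - g"
proof -
  have "\<ominus>\<^bsub>free_alg X\<^esub> g = - g"
    by (rule abelian_group.minus_equality[OF ring.is_abelian_group[OF free_alg_ring]])
       (auto simp: assms free_alg_neg_closed)
  then show ?thesis by (simp add: a_minus_def)
qed

lemma lift_word_Nil [simp]: "lift_word g [] = fa_scalar 1"
  by (simp add: lift_word_def)

lemma lift_word_Cons [simp]: "lift_word g (x # w) = fa_mult (g x) (lift_word g w)"
  by (simp add: lift_word_def)

lemma lift_word_append: "lift_word g (u @ v) = fa_mult (lift_word g u) (lift_word g v)"
  by (induction u) (auto simp: fa_mult_assoc)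

lemma lift_word_closed:
  "(\<And>x. x \<in> X \<Longrightarrow> g x \<in> carrier (free_alg Y)) \<Longrightarrow> set w \<subseteq> X \<Longrightarrow>
    lift_word g w \<in> carrier (free_alg Y)"
  by (induction w) (auto simp: free_alg_scalar_closed free_alg_mult_closed)

lemma lift_word_fa_gen: "lift_word fa_gen w = fa_word w"
  by (induction w) (auto simp: fa_gen_eq_word fa_mult_word, simp add: fa_word_def fa_scalar_def fun_eq_iff)

lemma fa_lift_expand:
  "finite S \<Longrightarrow> supp p \<subseteq> S \<Longrightarrow> fa_lift g p = (\<Sum>w\<in>S. fa_smult (p w) (lift_word g w))"
proof -
  assume S: "finite S" "supp p \<subseteq> S"
  have "fa_lift g p = (\<Sum>w\<in>supp p. fa_smult (p w) (lift_word g w))"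
    by (simp add: fa_lift_def fun_eq_iff sum_fun_apply fa_smult_def supp_def lift_word_def)
  also have "\<dots> = (\<Sum>w\<in>S. fa_smult (p w) (lift_word g w))"
    using S by (intro sum.mono_neutral_left) (auto simp: supp_def fa_smult_def fun_eq_iff)
  finally show ?thesis .
qed

lemma fa_lift_add:
  assumes "p \<in> carrier (free_alg X)" "q \<in> carrier (free_alg X)"
  shows "fa_lift g (p + q) = fa_lift g p + fa_lift g q"
proof -
  have S: "finite (supp p \<union> supp q)" using assms by (simp add: free_alg_carrier)
  show ?thesis
    unfolding fa_lift_expand[OF S supp_add] fa_lift_expand[OF S Un_upper1]
      fa_lift_expand[OF S Un_upper2]
    by (simp add: sum.distrib fa_smult_def distrib_right fun_eq_iff sum_fun_apply)
qed

lemma fa_lift_smult: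
  assumes "p \<in> carrier (free_alg X)"
  shows "fa_lift g (fa_smult c p) = fa_smult c (fa_lift g p)"
proof -
  have S: "finite (supp p)" using assms by (simp add: free_alg_carrier)
  have supp_smult: "supp (fa_smult c p) \<subseteq> supp p" by (auto simp: supp_def fa_smult_def)
  show ?thesis
    unfolding fa_lift_expand[OF S supp_smult] fa_lift_expand[OF S order_refl]
    by (simp add: fa_smult_def fun_eq_iff sum_fun_apply sum_distrib_left mult.assoc)
qed

lemma fa_lift_sum:
  "(\<And>i. i \<in> I \<Longrightarrow> F i \<in> carrier (free_alg X)) \<Longrightarrow>
    fa_lift g (\<Sum>i\<in>I. F i) = (\<Sum>i\<in>I. fa_lift g (F i))"
proof (induction I rule: infinite_finite_induct)
  case (insert i I)
  have "fa_lift g (sum F (insert i I)) = fa_lift g (F i + sum F I)"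
    unfolding sum.insert[OF insert.hyps] ..
  also have "\<dots> = fa_lift g (F i) + fa_lift g (sum F I)"
    using insert.prems by (intro fa_lift_add[where X = X] free_alg_sum_closed) auto
  also have "\<dots> = (\<Sum>i\<in>insert i I. fa_lift g (F i))"
    unfolding sum.insert[OF insert.hyps] using insert.IH insert.prems by simp
  finally show ?case .
qed (simp_all add: fa_lift_def supp_def zero_fun_def)

lemma fa_lift_diff:
  assumes "p \<in> carrier (free_alg X)" "q \<in> carrier (free_alg X)"
  shows "fa_lift g (p - q) = fa_lift g p - fa_lift g q"
proof -
  have "fa_lift g (p + fa_smult (-1) q) = fa_lift g p + fa_smult (-1) (fa_lift g q)"
    using assms by (simp add: fa_lift_add[where X = X] free_alg_smult_closed fa_lift_smult)
  then show ?thesis by (simp add: fa_smult_minus_one)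
qed

lemma fa_lift_word: "fa_lift g (fa_word w) = lift_word g w"
  using fa_lift_expand[of "{w}" "fa_word w" g] by (auto simp: supp_def fa_word_def fa_smult_def)

lemma fa_lift_gen: "fa_lift g (fa_gen x) = g x"
  by (simp add: fa_gen_eq_word fa_lift_word)

lemma fa_lift_scalar: "fa_lift g (fa_scalar c) = fa_scalar c"
  using fa_lift_smult[OF free_alg_word_closed[of "[]" UNIV], of g c]
  by (simp add: fa_scalar_eq_smult_word fa_lift_word fa_smult_def)

lemma fa_lift_mult:
  assumes p: "p \<in> carrier (free_alg X)" and q: "q \<in> carrier (free_alg X)"
  shows "fa_lift g (fa_mult p q) = fa_mult (fa_lift g p) (fa_lift g q)"
proof -
  have fin: "finite (supp p)" "finite (supp q)" using p q by (simp_all add: free_alg_carrier)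
  have word: "fa_smult c (fa_word w) \<in> carrier (free_alg UNIV)" for c w
    by (simp add: free_alg_smult_closed free_alg_word_closed)
  have "fa_mult p q = fa_mult (\<Sum>u\<in>supp p. fa_smult (p u) (fa_word u))
      (\<Sum>v\<in>supp q. fa_smult (q v) (fa_word v))"
    using fa_expand[OF fin(1) order_refl] fa_expand[OF fin(2) order_refl] by metis
  also have "\<dots> = (\<Sum>u\<in>supp p. \<Sum>v\<in>supp q. fa_smult (p u * q v) (fa_word (u @ v)))"
    unfolding fa_mult_sum_left unfolding fa_mult_sum_right
    by (simp only: fa_mult_smult_left fa_mult_smult_right fa_mult_word fa_smult_smult mult.commute)
  finally have "fa_lift g (fa_mult p q) =
      (\<Sum>u\<in>supp p. \<Sum>v\<in>supp q. fa_smult (p u * q v) (lift_word g (u @ v)))"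
    by (simp add: fa_lift_sum[where X = UNIV] free_alg_sum_closed word fa_lift_smult[where X = UNIV]
        free_alg_word_closed fa_lift_word)
  also have "\<dots> = fa_mult (\<Sum>u\<in>supp p. fa_smult (p u) (lift_word g u))
      (\<Sum>v\<in>supp q. fa_smult (q v) (lift_word g v))"
    unfolding fa_mult_sum_left unfolding fa_mult_sum_right
    by (simp only: fa_mult_smult_left fa_mult_smult_right lift_word_append fa_smult_smult mult.commute)
  also have "\<dots> = fa_mult (fa_lift g p) (fa_lift g q)"
    using fa_lift_expand[OF fin(1) order_refl] fa_lift_expand[OF fin(2) order_refl] by metis
  finally show ?thesis .
qed

lemma fa_lift_closed:
  assumes g: "\<And>x. x \<in> X \<Longrightarrow> g x \<in> carrier (free_alg Y)" and p: "p \<in> carrier (free_alg X)"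
  shows "fa_lift g p \<in> carrier (free_alg Y)"
proof -
  have "finite (supp p)" "\<And>w. w \<in> supp p \<Longrightarrow> set w \<subseteq> X" using p by (auto simp: free_alg_carrier)
  then show ?thesis unfolding fa_lift_expand[OF \<open>finite (supp p)\<close> order_refl]
    using g by (intro free_alg_sum_closed free_alg_smult_closed lift_word_closed[of X g Y]) auto
qed

lemma fa_lift_ring_hom:
  "(\<And>x. x \<in> X \<Longrightarrow> g x \<in> carrier (free_alg Y)) \<Longrightarrow>
    fa_lift g \<in> ring_hom (free_alg X) (free_alg Y)"
  by (rule ring_hom_memI)
     (auto simp: fa_lift_mult fa_lift_add fa_lift_scalar intro: fa_lift_closed)

lemma fa_lift_lift_word:
  assumes "\<And>x. x \<in> X \<Longrightarrow> h x \<in> carrier (free_alg Y)" "set w \<subseteq> X"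
  shows "fa_lift g (lift_word h w) = lift_word (\<lambda>x. fa_lift g (h x)) w"
  using assms
  by (induction w) (auto simp: fa_lift_scalar fa_lift_mult[where X = Y] lift_word_closed[of X h Y])

lemma fa_lift_comp:
  assumes h: "\<And>x. x \<in> X \<Longrightarrow> h x \<in> carrier (free_alg Y)" and p: "p \<in> carrier (free_alg X)"
  shows "fa_lift g (fa_lift h p) = fa_lift (\<lambda>x. fa_lift g (h x)) p"
proof -
  have P: "finite (supp p)" "\<And>w. w \<in> supp p \<Longrightarrow> set w \<subseteq> X"
    using p by (auto simp: free_alg_carrier)
  have "fa_lift g (fa_lift h p) = (\<Sum>w\<in>supp p. fa_smult (p w) (fa_lift g (lift_word h w)))"
    unfolding fa_lift_expand[OF P(1) order_refl]
    using lift_word_closed[OF h P(2)]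
    by (simp add: fa_lift_sum[where X = Y] free_alg_smult_closed fa_lift_smult[where X = Y])
  also have "\<dots> = fa_lift (\<lambda>x. fa_lift g (h x)) p"
    unfolding fa_lift_expand[OF P(1) order_refl]
    using P(2) h by (intro sum.cong refl) (simp add: fa_lift_lift_word[OF h])
  finally show ?thesis .
qed

lemma fa_lift_fa_gen: "p \<in> carrier (free_alg X) \<Longrightarrow> fa_lift fa_gen p = p"
  using fa_lift_expand[of "supp p" p fa_gen] fa_expand[of "supp p" p]
  by (simp add: free_alg_carrier lift_word_fa_gen)

lemma fa_lift_cong:
  assumes "\<And>x. x \<in> X \<Longrightarrow> g x = h x" and p: "p \<in> carrier (free_alg X)"
  shows "fa_lift g p = fa_lift h p"
proof -
  have word: "lift_word g w = lift_word h w" if "set w \<subseteq> X" for w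
    using that assms(1) by (induction w) auto
  have "finite (supp p)" "\<And>w. w \<in> supp p \<Longrightarrow> set w \<subseteq> X" using p by (auto simp: free_alg_carrier)
  then show ?thesis unfolding fa_lift_expand[OF \<open>finite (supp p)\<close> order_refl]
    using word by (intro sum.cong refl) auto
qed

lemma fa_smult_eq_mult_scalar: "fa_smult c f = fa_mult (fa_scalar c) f"
  by (metis fa_mult_one_left fa_mult_smult_left fa_scalar_eq_smult_word fa_smult_smult mult_1_right)

lemma fa_lift_diff_in_ideal:
  assumes I: "ideal I (free_alg Y)"
    and g: "\<And>x. x \<in> X \<Longrightarrow> g x \<in> carrier (free_alg Y)"
    and h: "\<And>x. x \<in> X \<Longrightarrow> h x \<in> carrier (free_alg Y)"
    and gh: "\<And>x. x \<in> X \<Longrightarrow> g x - h x \<in> I"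
    and p: "p \<in> carrier (free_alg X)"
  shows "fa_lift g p - fa_lift h p \<in> I"
proof -
  interpret I: ideal I "free_alg Y" by (rule I)
  have zero: "0 \<in> I" using additive_subgroup.zero_closed[OF ideal.axioms(1)[OF I]] by simp
  have add: "a + b \<in> I" if "a \<in> I" "b \<in> I" for a b
    using additive_subgroup.a_closed[OF ideal.axioms(1)[OF I] that] by simp
  have sum_closed: "sum F A \<in> I" if "\<And>i. i \<in> A \<Longrightarrow> F i \<in> I" for F A
    using that by (induction A rule: infinite_finite_induct) (use zero add in auto)
  have word: "lift_word g w - lift_word h w \<in> I" if "set w \<subseteq> X" for w
    using that
  proof (induction w)
    case (Cons x w)
    have "lift_word g (x # w) - lift_word h (x # w) =
        fa_mult (g x - h x) (lift_word g w) + fa_mult (h x) (lift_word g w - lift_word h w)"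
      by (simp add: fa_mult_diff_left fa_mult_diff_right)
    also have "\<dots> \<in> I"
    proof (rule add)
      show "fa_mult (g x - h x) (lift_word g w) \<in> I"
        using I.I_r_closed[OF gh] Cons.prems lift_word_closed[where X = X and g = g] g by simp
      show "fa_mult (h x) (lift_word g w - lift_word h w) \<in> I"
        using I.I_l_closed[OF Cons.IH h] Cons.prems
        by (simp only: free_alg_mult list.set insert_subset)
    qed
    finally show ?case .
  qed (simp add: zero)
  have P: "finite (supp p)" "\<And>w. w \<in> supp p \<Longrightarrow> set w \<subseteq> X"
    using p by (auto simp: free_alg_carrier)
  have "fa_lift g p - fa_lift h p =
      (\<Sum>w\<in>supp p. fa_mult (fa_scalar (p w)) (lift_word g w - lift_word h w))"
    unfolding fa_lift_expand[OF P(1) order_refl] sum_subtractf[symmetric]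
    by (simp add: fa_smult_eq_mult_scalar fa_mult_diff_right)
  also have "\<dots> \<in> I"
    using P word by (intro sum_closed) (simp add: I.I_l_closed[simplified] free_alg_scalar_closed)
  finally show ?thesis .
qed

section \<open>Paths and their coefficients\<close>

definition edge_sum :: "('v \<times> 'v) list \<Rightarrow> (('v \<times> 'v) list \<Rightarrow> 'k::field)" where
  "edge_sum p = sum_list (map fa_gen p)"

definition path_relations :: "('v \<times> 'v) set \<Rightarrow> (('v \<times> 'v) list \<Rightarrow> 'k::field) set" where
  "path_relations E = {fa_diff (ecoef p i) (ecoef q i) | p q i.
     is_path E p \<and> is_path E q \<and> path_equiv p q \<and> i \<le> length p}"

lemma R_E_eq_genideal: "R_E E = genideal (free_alg E) (path_relations E)"
  by (simp add: R_E_def path_relations_def)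

lemma is_path_Cons:
  "is_path E (e # q) \<longleftrightarrow> e \<in> E \<and> (q = [] \<or> is_path E q \<and> snd e = fst (hd q))"
proof (cases q)
  case (Cons a q')
  have "(\<forall>j. Suc j < length (e # q) \<longrightarrow> snd ((e # q) ! j) = fst ((e # q) ! Suc j)) \<longleftrightarrow>
      snd e = fst a \<and> (\<forall>j. Suc j < length q \<longrightarrow> snd (q ! j) = fst (q ! Suc j))"
    unfolding Cons by (auto simp: nth_Cons split: nat.splits)
  then show ?thesis using Cons by (auto simp: is_path_def)
qed (simp add: is_path_def)

lemma path_set: "is_path E p \<Longrightarrow> set p \<subseteq> E"
  by (simp add: is_path_def)

lemma lambda_zero_eq_zero: "(\<lambda>x. 0) = (0 :: 'a \<Rightarrow> 'b::zero)"
  by (simp add: zero_fun_def)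

lemma ecoef_above_length: "length p < i \<Longrightarrow> ecoef p i = 0"
  by (induction p arbitrary: i) (auto simp: fa_diff_eq_minus lambda_zero_eq_zero)

lemma ecoef_length: "ecoef p (length p) = fa_scalar 1"
  by (induction p) (auto simp: fa_diff_eq_minus ecoef_above_length)

lemma ecoef_subleading:
  "length p = Suc n \<Longrightarrow> ecoef p n = (- edge_sum p :: ('v \<times> 'v) list \<Rightarrow> 'k::field)"
proof (induction p arbitrary: n)
  case (Cons e q)
  note IH = Cons.IH and len = Cons.prems
  show ?case
  proof (cases q)
    case Nil
    then show ?thesis using len by (simp add: fa_diff_eq_minus edge_sum_def lambda_zero_eq_zero)
  next
    case (Cons a q')
    then obtain m where m: "n = Suc m" "length q = Suc m" using len by auto
    then have "ecoef (e # q) n = ecoef q m - fa_mult (fa_gen e) (ecoef q (Suc m) :: _ \<Rightarrow> 'k)"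
      by (simp add: fa_diff_eq_minus)
    also have "\<dots> = - edge_sum q - fa_gen e"
      using IH[OF m(2)] by (simp add: ecoef_length[of q, unfolded m(2)] fun_eq_iff)
    also have "\<dots> = - edge_sum (e # q)"
      by (simp add: edge_sum_def)
    finally show ?thesis .
  qed
qed simp

lemma ecoef_closed: "set p \<subseteq> E \<Longrightarrow> ecoef p i \<in> carrier (free_alg E)"
  by (induction p arbitrary: i)
     (auto simp: fa_diff_eq_minus free_alg_scalar_closed free_alg_zero_closed lambda_zero_eq_zero
       intro!: free_alg_diff_closed free_alg_neg_closed free_alg_mult_closed free_alg_gen_closed)

lemma edge_sum_closed: "set p \<subseteq> E \<Longrightarrow> edge_sum p \<in> carrier (free_alg E)"
  by (induction p)
     (auto simp: edge_sum_def free_alg_zero_closed intro!: free_alg_add_closed free_alg_gen_closed)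

lemma fa_lift_edge_sum: "fa_lift g (edge_sum p) = sum_list (map g p)"
proof (induction p)
  case (Cons e p)
  have "fa_lift g (edge_sum (e # p)) = fa_lift g (fa_gen e + edge_sum p)"
    by (simp add: edge_sum_def)
  also have "\<dots> = g e + fa_lift g (edge_sum p)"
    using fa_lift_add[where X = UNIV] free_alg_gen_closed edge_sum_closed fa_lift_gen
    by (metis subset_UNIV UNIV_I)
  finally show ?case using Cons by simp
qed (simp add: edge_sum_def fa_lift_def supp_def zero_fun_def)

lemma path_relations_closed: "path_relations E \<subseteq> carrier (free_alg E)"
  by (auto simp: path_relations_def fa_diff_eq_minus is_path_def
      intro!: free_alg_diff_closed ecoef_closed)

lemma edge_sum_diff_in_R_E:
  assumes "is_path E p" "is_path E q" "path_equiv p q"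
  shows "edge_sum q - edge_sum p \<in> R_E E"
proof -
  obtain n where n: "length p = Suc n" "length q = Suc n"
    using assms by (cases p) (auto simp: is_path_def path_equiv_def)
  then have "fa_diff (ecoef p n) (ecoef q n) = edge_sum q - edge_sum p"
    by (simp add: fa_diff_eq_minus ecoef_subleading)
  moreover have "fa_diff (ecoef p n) (ecoef q n) \<in> path_relations E"
    using assms n unfolding path_relations_def by (intro CollectI exI[of _ p] exI[of _ q] exI[of _ n]) simp
  ultimately show ?thesis
    unfolding R_E_eq_genideal
    by (metis ring.genideal_self[OF free_alg_ring path_relations_closed] subsetD)
qed

section \<open>Rooted layered graphs\<close>

locale rooted_layered_graph =
  fixes V :: "'v set" and E :: "('v \<times> 'v) set" and lvl :: "'v \<Rightarrow> nat" and s :: 'v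
  assumes layered: "layered_graph V E lvl" and root: "unique_min V lvl s"
begin

lemma root_level: "lvl s = 0"
  and level_zero_imp_root: "v \<in> V \<Longrightarrow> lvl v = 0 \<Longrightarrow> v = s"
  using root unfolding unique_min_def by auto

lemma edgeD:
  "e \<in> E \<Longrightarrow> fst e \<in> V \<and> snd e \<in> V \<and> lvl (fst e) = Suc (lvl (snd e))"
  using layered unfolding layered_graph_def by fastforce

lemma edge_source_in_Vplus: "e \<in> E \<Longrightarrow> fst e \<in> Vplus V lvl"
  using edgeD by (simp add: Vplus_def)

lemma edge_target_in_Vplus: "e \<in> E \<Longrightarrow> snd e \<noteq> s \<Longrightarrow> snd e \<in> Vplus V lvl"
  using edgeD level_zero_imp_root[of "snd e"] by (fastforce simp: Vplus_def)

lemma path_level: "is_path E p \<Longrightarrow> lvl (fst (hd p)) = lvl (snd (last p)) + length p"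
proof (induction p)
  case (Cons e q)
  then show ?case
    using edgeD by (cases "q = []") (auto simp: is_path_Cons)
qed (simp add: is_path_def)

lemma path_to_root_exists:
  "v \<in> Vplus V lvl \<Longrightarrow> \<exists>p. is_path E p \<and> fst (hd p) = v \<and> snd (last p) = s"
proof (induction "lvl v" arbitrary: v)
  case (Suc n)
  obtain w where vw: "(v, w) \<in> E"
    using Suc.prems layered unfolding layered_graph_def Vplus_def by auto
  have w: "w \<in> V" "lvl w = n" using edgeD[OF vw] Suc.hyps(2) by auto
  show ?case
  proof (cases "n = 0")
    case True
    then show ?thesis using vw w level_zero_imp_root by (intro exI[of _ "[(v, w)]"]) (auto simp: is_path_def)
  next
    case False
    then obtain q where q: "is_path E q" "fst (hd q) = w" "snd (last q) = s"
      using Suc.hyps(1)[of w] w by (auto simp: Vplus_def)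
    then have "q \<noteq> []" by (auto simp: is_path_def)
    then show ?thesis using q vw by (intro exI[of _ "(v, w) # q"]) (auto simp: is_path_Cons)
  qed
qed (simp add: Vplus_def)

text \<open>The empty path at the root makes \<open>e # root_path w\<close> a path to the root for every edge
  \<open>e = (v, w)\<close>, also when \<open>w = s\<close>.\<close>
definition root_path :: "'v \<Rightarrow> ('v \<times> 'v) list" where
  "root_path v = (if v = s then [] else SOME p. is_path E p \<and> fst (hd p) = v \<and> snd (last p) = s)"

lemma root_path:
  assumes "v \<in> Vplus V lvl"
  shows "is_path E (root_path v)" "fst (hd (root_path v)) = v" "snd (last (root_path v)) = s"
    and "length (root_path v) = lvl v"
proof -
  have "v \<noteq> s" using assms root_level by (auto simp: Vplus_def)
  then have *: "is_path E (root_path v) \<and> fst (hd (root_path v)) = v \<and> snd (last (root_path v)) = s"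
    unfolding root_path_def using someI_ex[OF path_to_root_exists[OF assms]] by simp
  then show "is_path E (root_path v)" "fst (hd (root_path v)) = v" "snd (last (root_path v)) = s"
    by simp_all
  show "length (root_path v) = lvl v" using path_level * root_level by force
qed

lemma edge_then_root_path:
  assumes e: "e \<in> E"
  shows "is_path E (e # root_path (snd e))" "path_equiv (root_path (fst e)) (e # root_path (snd e))"
proof -
  have v: "fst e \<in> Vplus V lvl" by (rule edge_source_in_Vplus[OF e])
  have levels: "lvl (fst e) = Suc (lvl (snd e))" using edgeD[OF e] by simp
  show "is_path E (e # root_path (snd e))"
    using e root_path[OF edge_target_in_Vplus[OF e]] by (auto simp: is_path_Cons root_path_def)
  show "path_equiv (root_path (fst e)) (e # root_path (snd e))"
  proof (cases "snd e = s")
    case True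
    then show ?thesis using root_path[OF v] levels root_level by (simp add: path_equiv_def root_path_def)
  next
    case False
    note w = edge_target_in_Vplus[OF e False]
    have "root_path (snd e) \<noteq> []" using root_path(1)[OF w] by (simp add: is_path_def)
    then show ?thesis using root_path[OF v] root_path[OF w] levels by (simp add: path_equiv_def)
  qed
qed

definition phi :: "(('v \<times> 'v) list \<Rightarrow> 'k::field) \<Rightarrow> ('v list \<Rightarrow> 'k)" where
  "phi = fa_lift (phi2_gen s)"

definition psi :: "('v list \<Rightarrow> 'k::field) \<Rightarrow> (('v \<times> 'v) list \<Rightarrow> 'k)" where
  "psi = fa_lift (\<lambda>v. edge_sum (root_path v))"

lemma phi2_gen_closed:
  assumes "e \<in> E" shows "phi2_gen s e \<in> carrier (free_alg (Vplus V lvl))"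
  using edge_source_in_Vplus[OF assms] edge_target_in_Vplus[OF assms]
  by (cases "snd e = s")
     (simp_all add: phi2_gen_def fa_diff_eq_minus free_alg_gen_closed free_alg_diff_closed)

lemma phi_ring_hom: "phi \<in> ring_hom (free_alg E) (free_alg (Vplus V lvl))"
  unfolding phi_def by (rule fa_lift_ring_hom) (rule phi2_gen_closed)

lemma psi_ring_hom: "psi \<in> ring_hom (free_alg (Vplus V lvl)) (free_alg E)"
  unfolding psi_def
  by (rule fa_lift_ring_hom) (use root_path(1) in \<open>auto simp: is_path_def intro: edge_sum_closed\<close>)

lemma sum_phi2_gen_telescopes:
  "is_path E p \<Longrightarrow> snd (last p) = s \<Longrightarrow> sum_list (map (phi2_gen s) p) = fa_gen (fst (hd p))"
proof (induction p)
  case (Cons e q)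
  show ?case
  proof (cases "q = []")
    case False
    then have q: "is_path E q" "snd e = fst (hd q)" using Cons.prems by (auto simp: is_path_Cons)
    have "hd q \<in> E" using q(1) False by (auto simp: is_path_def)
    then have "snd e \<noteq> s" using edgeD q(2) root_level by fastforce
    then show ?thesis using Cons q False by (simp add: phi2_gen_def fa_diff_eq_minus)
  qed (use Cons.prems in \<open>simp add: phi2_gen_def\<close>)
qed (simp add: is_path_def)

lemma phi_psi: "x \<in> carrier (free_alg (Vplus V lvl)) \<Longrightarrow> phi (psi x) = x"
proof -
  assume x: "x \<in> carrier (free_alg (Vplus V lvl))"
  have "phi (psi x) = fa_lift (\<lambda>v. phi (edge_sum (root_path v))) x"
    unfolding phi_def psi_def
    by (rule fa_lift_comp[OF _ x]) (use root_path(1) in \<open>auto simp: is_path_def intro: edge_sum_closed\<close>)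
  also have "\<dots> = fa_lift fa_gen x"
    by (rule fa_lift_cong[OF _ x])
       (simp add: phi_def fa_lift_edge_sum sum_phi2_gen_telescopes root_path)
  also have "\<dots> = x" by (rule fa_lift_fa_gen[OF x])
  finally show ?thesis .
qed

lemma psi_phi2_gen:
  assumes "e \<in> E"
  shows "psi (phi2_gen s e) = edge_sum (root_path (fst e)) - edge_sum (root_path (snd e))"
proof (cases "snd e = s")
  case True
  then show ?thesis by (simp add: psi_def phi2_gen_def fa_lift_gen root_path_def edge_sum_def)
next
  case False
  then show ?thesis
    by (simp add: psi_def phi2_gen_def fa_diff_eq_minus fa_lift_gen
        fa_lift_diff[where X = UNIV] free_alg_gen_closed)
qed

lemma fa_gen_minus_psi_phi2_gen:
  assumes e: "e \<in> E"
  shows "fa_gen e - psi (phi2_gen s e) \<in> R_E E"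
proof -
  have "fa_gen e - psi (phi2_gen s e) = edge_sum (e # root_path (snd e)) - edge_sum (root_path (fst e))"
    by (simp add: psi_phi2_gen[OF e] edge_sum_def)
  also have "\<dots> \<in> R_E E"
    using edge_then_root_path[OF e] root_path(1)[OF edge_source_in_Vplus[OF e]]
    by (intro edge_sum_diff_in_R_E)
  finally show ?thesis .
qed

lemma minus_psi_phi_in_R_E:
  assumes x: "x \<in> carrier (free_alg E)"
  shows "x - psi (phi x) \<in> R_E E"
proof -
  have ideal: "ideal (R_E E) (free_alg E)"
    unfolding R_E_eq_genideal by (rule ring.genideal_ideal[OF free_alg_ring path_relations_closed])
  have "psi (phi x) = fa_lift (\<lambda>e. psi (phi2_gen s e)) x"
    unfolding phi_def psi_def by (rule fa_lift_comp[OF phi2_gen_closed x])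
  then have "x - psi (phi x) = fa_lift fa_gen x - fa_lift (\<lambda>e. psi (phi2_gen s e)) x"
    by (simp add: fa_lift_fa_gen[OF x])
  also have "\<dots> \<in> R_E E"
    using free_alg_gen_closed ring_hom_closed[OF psi_ring_hom phi2_gen_closed]
      fa_gen_minus_psi_phi2_gen
    by (intro fa_lift_diff_in_ideal[OF ideal _ _ _ x])
  finally show ?thesis .
qed

lemma phi_ecoef_diff:
  "set p \<subseteq> E \<Longrightarrow> set q \<subseteq> E \<Longrightarrow>
    phi (fa_diff (ecoef p i) (ecoef q i)) = fa_diff (etilde s p i) (etilde s q i)"
  by (simp add: phi_def etilde_def fa_diff_eq_minus fa_lift_diff[where X = E] ecoef_closed)

lemma image_phi_path_relations:
  "phi ` path_relations E = {fa_diff (etilde s p i) (etilde s q i) | p q i.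
      is_path E p \<and> is_path E q \<and> path_equiv p q \<and> i \<le> length p}"
  (is "_ = ?L")
proof
  show "phi ` path_relations E \<subseteq> ?L"
    unfolding path_relations_def by (auto simp: phi_ecoef_diff path_set) blast
  show "?L \<subseteq> phi ` path_relations E"
  proof
    fix z assume "z \<in> ?L"
    then obtain p q i where pq: "is_path E p" "is_path E q" "path_equiv p q" "i \<le> length p"
      and z: "z = fa_diff (etilde s p i) (etilde s q i)" by blast
    then have "z = phi (fa_diff (ecoef p i) (ecoef q i))" by (simp add: phi_ecoef_diff path_set)
    then show "z \<in> phi ` path_relations E"
      using pq unfolding path_relations_def by blast
  qed
qed

lemma R_V_eq_genideal: "R_V V E lvl s = genideal (free_alg (Vplus V lvl)) (phi ` path_relations E)"
  by (simp add: R_V_def image_phi_path_relations)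

lemma minus_psi_phi_in_genideal:
  assumes x: "x \<in> carrier (free_alg E)"
  shows "x \<ominus>\<^bsub>free_alg E\<^esub> psi (phi x) \<in> genideal (free_alg E) (path_relations E)"
  using minus_psi_phi_in_R_E[OF x] ring_hom_closed[OF psi_ring_hom ring_hom_closed[OF phi_ring_hom x]]
  by (simp add: free_alg_minus[OF x] R_E_eq_genideal)

lemma labeling_alg_iso:
  "\<exists>h. h \<in> ring_iso (labeling_alg E) (free_alg (Vplus V lvl) Quot R_V V E lvl s) \<and>
     (\<forall>x \<in> carrier (free_alg E). h (R_E E +>\<^bsub>free_alg E\<^esub> x) =
        R_V V E lvl s +>\<^bsub>free_alg (Vplus V lvl)\<^esub> phi x)"
  unfolding labeling_alg_def R_E_eq_genideal R_V_eq_genideal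
  by (rule quotient_iso_of_retraction[where g = psi])
     (simp_all add: free_alg_ring phi_ring_hom psi_ring_hom path_relations_closed phi_psi
       minus_psi_phi_in_genideal)

end

theorem mainTheorem2:
  fixes V :: "'v set" and E :: "('v \<times> 'v) set" and lvl :: "'v \<Rightarrow> nat" and s :: 'v
  assumes "layered_graph V E lvl" and "unique_min V lvl s"
  shows "\<exists>h. h \<in> ring_iso (labeling_alg E :: (('v \<times> 'v) list \<Rightarrow> 'k::field) set ring)
                            (free_alg (Vplus V lvl) Quot (R_V V E lvl s :: ('v list \<Rightarrow> 'k) set)) \<and>
             (\<forall>c::'k. h (R_E E +>\<^bsub>free_alg E\<^esub> fa_scalar c)
                      = R_V V E lvl s +>\<^bsub>free_alg (Vplus V lvl)\<^esub> fa_scalar c)"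
proof -
  interpret rooted_layered_graph V E lvl s using assms by (rule rooted_layered_graph.intro)
  obtain h where iso: "h \<in> ring_iso (labeling_alg E :: (('v \<times> 'v) list \<Rightarrow> 'k) set ring)
      (free_alg (Vplus V lvl) Quot R_V V E lvl s)"
    and classes: "\<forall>x \<in> carrier (free_alg E). h (R_E E +>\<^bsub>free_alg E\<^esub> x) =
      R_V V E lvl s +>\<^bsub>free_alg (Vplus V lvl)\<^esub> phi x"
    using labeling_alg_iso by blast
  have "phi (fa_scalar c) = fa_scalar c" for c :: 'k
    by (simp add: phi_def fa_lift_scalar)
  then show ?thesis
    using iso classes free_alg_scalar_closed[of _ E] by metis
qed

end
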